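(* Let $\mathbb{F}\in\{\mathbb{R},\mathbb{C}\}$, let $\Phi=\{\varphi_i\}_{i=1}^M$ be a Parseval frame for $\mathbb{F}^N$ and let $\Psi=\{\psi_i\}_{i=1}^M$ be a Naimark complement of $\Phi$. Let $k\leq\min\{N,M-N\}$. If $v_k(\Phi_K)=c_{M,N,k}$ for every $K\subseteq[M]$ with $|K|=k$, then $v_k(\Psi_K)=c_{M,M-N,k}$ for every $K\subseteq[M]$ with $|K|=k$.
   Context: A Parseval frame for $\mathbb{F}^N$ is a family $\{\varphi_i\}_{i=1}^M\subseteq\mathbb{F}^N$ whose $N\times M$ matrix $\Phi$ (columns $\varphi_i$) satisfies $\Phi\Phi^*=I$. A Naimark complement of $\Phi$ is any $\Psi=\{\psi_i\}_{i=1}^M\subseteq\mathbb{F}^{M-N}$ with $\Psi^*\Psi=I-\Phi^*\Phi$. For $K\subseteq[M]$, $\Phi_K$ is the submatrix of columns indexed by $K$; $v_k(F)=\sqrt{\det(F^*F)}$; and $c_{M,N,k}=\sqrt{{M\choose k}^{-1}{N\choose k}}$. *)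

theory Defs
  imports "Jordan_Normal_Form.Schur_Decomposition" "Jordan_Normal_Form.DL_Submatrix"
begin

text \<open>Frames are represented by their synthesis matrices: an N x M matrix whose
  columns are the frame vectors (indexed 0..M-1). The conjugate transpose is
  the library's mat_adjoint.\<close>

definition parseval_frame :: "nat \<Rightarrow> nat \<Rightarrow> 'a::conjugatable_field mat \<Rightarrow> bool" where
  "parseval_frame N M Phi \<longleftrightarrow> Phi \<in> carrier_mat N M \<and> Phi * mat_adjoint Phi = 1\<^sub>m N"

definition naimark_complement :: "nat \<Rightarrow> nat \<Rightarrow> 'a::conjugatable_field mat \<Rightarrow> 'a mat \<Rightarrow> bool" where
  "naimark_complement N M Phi Psi \<longleftrightarrow> Psi \<in> carrier_mat (M - N) M \<and>
     mat_adjoint Psi * Psi = 1\<^sub>m M - mat_adjoint Phi * Phi"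

definition cols_sub :: "'a mat \<Rightarrow> nat set \<Rightarrow> 'a mat" where
  "cols_sub A K = submatrix A {0..<dim_row A} K"

text \<open>For complex matrices det(F^* F) is a nonnegative real number (a complex number
  with zero imaginary part), so we take the square root of its real part.\<close>
definition vol_r :: "real mat \<Rightarrow> real" where
  "vol_r F = sqrt (det (mat_adjoint F * F))"

definition vol_c :: "complex mat \<Rightarrow> real" where
  "vol_c F = sqrt (Re (det (mat_adjoint F * F)))"

definition cMNk :: "nat \<Rightarrow> nat \<Rightarrow> nat \<Rightarrow> real" where
  "cMNk M N k = sqrt (real (N choose k) / real (M choose k))"

end

theory Submission
  imports Defs "HOL-Combinatorics.Permutations"
begin

text \<open>
  The matrix P = Phi^* Phi is idempotent with trace N; the Gram matrix of Phi_K is its principal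
  submatrix P_K, and the Gram matrix of Psi_K is (I - P)_K. Bordering a principal minor by one
  more index and summing over all indices outside J, idempotence and the trace give
  sum_{i not in J} det P_{J + i} = (N - |J|) det P_J. Hence, if all principal k-minors of P equal
  C(N,k)/C(M,k), then all principal j-minors with j <= k equal C(N,j)/C(M,j). Inserting this into
  det (I - P)_K = sum_{X subset K} (-1)^|X| det P_X leaves an alternating binomial sum, which
  equals C(M-N,k)/C(M,k). Every step is additive in the minors, so for complex frames it is
  enough to follow their real parts, which is all the hypothesis controls.
\<close>

section \<open>Principal minors of matrices indexed by sets\<close>

(* Matrices are functions on an index type, so that principal submatrices need no reindexing. *)
definition det_on :: "'i set \<Rightarrow> ('i \<Rightarrow> 'i \<Rightarrow> 'a::comm_ring_1) \<Rightarrow> 'a" where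
  "det_on S a = (\<Sum>p | p permutes S. of_int (sign p) * (\<Prod>i\<in>S. a i (p i)))"

(* The (y, x) entry of the adjugate of the principal submatrix on S. *)
definition cofactor_on :: "'i set \<Rightarrow> ('i \<Rightarrow> 'i \<Rightarrow> 'a::comm_ring_1) \<Rightarrow> 'i \<Rightarrow> 'i \<Rightarrow> 'a" where
  "cofactor_on S a x y = det_on S (a(x := (\<lambda>c. of_bool (c = y))))"

lemma det_on_cong:
  assumes "\<And>i j. i \<in> S \<Longrightarrow> j \<in> S \<Longrightarrow> a i j = b i j"
  shows "det_on S a = det_on S b"
  unfolding det_on_def
  by (intro sum.cong refl arg_cong[where f="\<lambda>x. _ * x"] prod.cong)
    (auto simp: assms permutes_in_image)

lemma det_on_equal_rows:
  fixes a :: "'i \<Rightarrow> 'i \<Rightarrow> 'a::field_char_0"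
  assumes "finite S" "x \<in> S" "y \<in> S" "x \<noteq> y" and rows: "a x = a y"
  shows "det_on S a = 0"
proof -
  define \<tau> where "\<tau> = transpose x y"
  have \<tau>: "\<tau> permutes S" "\<tau> \<circ> \<tau> = id"
    using assms by (simp_all add: \<tau>_def permutes_swap_id fun_eq_iff)
  have a\<tau>: "a (\<tau> i) = a i" for i
    using rows by (simp add: \<tau>_def transpose_def)
  define F where "F p = of_int (sign p) * (\<Prod>i\<in>S. a i (p i))" for p
  have F\<tau>: "F (p \<circ> \<tau>) = - F p" if "p permutes S" for p
  proof -
    have "sign (p \<circ> \<tau>) = - sign p"
      using sign_compose[OF permutes_imp_permutation[OF \<open>finite S\<close> that] 
          permutes_imp_permutation[OF \<open>finite S\<close> \<tau>(1)]] assms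
      by (simp add: \<tau>_def sign_swap_id)
    moreover have "(\<Prod>i\<in>S. a i (p (\<tau> i))) = (\<Prod>i\<in>S. a i (p i))"
      using prod.reindex_bij_betw[OF permutes_imp_bij[OF \<tau>(1)], of "\<lambda>i. a i (p i)"]
      by (simp add: a\<tau>)
    ultimately show ?thesis by (simp add: F_def)
  qed
  have "det_on S a = (\<Sum>p | p permutes S. F (p \<circ> \<tau>))"
    unfolding det_on_def F_def[symmetric]
    by (rule sum.reindex_bij_witness[where i="\<lambda>p. p \<circ> \<tau>" and j="\<lambda>p. p \<circ> \<tau>"])
      (auto simp: comp_assoc \<tau>(2) permutes_compose[OF \<tau>(1)])
  also have "\<dots> = (\<Sum>p | p permutes S. - F p)"
    by (rule sum.cong) (simp_all add: F\<tau>)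
  also have "\<dots> = - det_on S a"
    by (simp add: det_on_def F_def sum_negf)
  finally show ?thesis by simp
qed

lemma det_on_fun_upd:
  assumes "finite S" "x \<in> S"
  shows "det_on S (a(x := v)) =
    (\<Sum>p | p permutes S. of_int (sign p) * v (p x) * (\<Prod>i\<in>S-{x}. a i (p i)))"
  unfolding det_on_def
  by (intro sum.cong refl) (simp add: prod.remove[OF assms] mult.assoc)

lemma det_on_row_expansion:
  assumes "finite S" "x \<in> S"
  shows "det_on S (a(x := v)) = (\<Sum>y\<in>S. v y * cofactor_on S a x y)"
proof -
  have "(\<Sum>y\<in>S. v y * cofactor_on S a x y) =
      (\<Sum>p | p permutes S. \<Sum>y\<in>S.
        if p x = y then v y * (of_int (sign p) * (\<Prod>i\<in>S-{x}. a i (p i))) else 0)"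
    unfolding cofactor_on_def det_on_fun_upd[OF assms]
    by (subst sum.swap) (auto simp: sum_distrib_left of_bool_def intro!: sum.cong)
  also have "\<dots> = (\<Sum>p | p permutes S. of_int (sign p) * v (p x) * (\<Prod>i\<in>S-{x}. a i (p i)))"
    using assms by (intro sum.cong refl) (simp add: permutes_in_image)
  finally show ?thesis by (simp add: det_on_fun_upd[OF assms])
qed

lemma cofactor_on_expansion:
  fixes a :: "'i \<Rightarrow> 'i \<Rightarrow> 'a::field_char_0"
  assumes "finite S" "x \<in> S" "r \<in> S"
  shows "(\<Sum>y\<in>S. a r y * cofactor_on S a x y) = (if r = x then det_on S a else 0)"
  using det_on_row_expansion[OF assms(1,2), of a "a r", symmetric]
    det_on_equal_rows[OF assms(1,2,3), of "a(x := a r)"]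
  by (auto simp: fun_upd_idem)

lemma sum_over_permutations_insert_right:
  assumes "finite S" "a \<notin> S"
  shows "sum f {p. p permutes insert a S} =
    (\<Sum>b\<in>insert a S. \<Sum>q | q permutes S. f (q \<circ> transpose a b))"
proof -
  have inv_swap: "Hilbert_Choice.inv (transpose a b \<circ> q) = Hilbert_Choice.inv q \<circ> transpose a b"
    if "q permutes S" for b q
    using that by (simp add: o_inv_distrib permutes_bij bij_swap_iff)
  have "sum f {p. p permutes insert a S} =
      (\<Sum>p | p permutes insert a S. f (Hilbert_Choice.inv p))"
    by (rule sum_permutations_inverse)
  also have "\<dots> =
      (\<Sum>b\<in>insert a S. \<Sum>q | q permutes S. f (Hilbert_Choice.inv q \<circ> transpose a b))"
    unfolding sum_over_permutations_insert[OF assms] by (intro sum.cong refl) (simp add: inv_swap)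
  also have "\<dots> = (\<Sum>b\<in>insert a S. \<Sum>q | q permutes S. f (q \<circ> transpose a b))"
    by (rule sum.cong[OF refl]) (rule sum_permutations_inverse[symmetric])
  finally show ?thesis .
qed

lemma det_on_insert:
  assumes "finite S" "i \<notin> S"
  shows "det_on (insert i S) a =
    a i i * det_on S a - (\<Sum>x\<in>S. a x i * det_on S (a(x := a i)))"
proof -
  define F where "F p = of_int (sign p) * (\<Prod>j\<in>insert i S. a j (p j))" for p
  have fix_i: "q i = i" if "q permutes S" for q
    using that assms(2) by (simp add: permutes_not_in)
  have F_id: "F q = a i i * (of_int (sign q) * (\<Prod>j\<in>S. a j (q j)))" if "q permutes S" for q
    using that assms by (simp add: F_def fix_i)
  have F_swap: "F (q \<circ> transpose i x) =
      - (a x i * (of_int (sign q) * a i (q x) * (\<Prod>j\<in>S-{x}. a j (q j))))"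
    if q: "q permutes S" and x: "x \<in> S" for q x
  proof -
    have "x \<noteq> i" using x assms(2) by auto
    then have "sign (q \<circ> transpose i x) = - sign q"
      using sign_compose[OF permutes_imp_permutation[OF assms(1) q] permutation_swap_id]
      by (simp add: sign_swap_id)
    moreover have "(\<Prod>j\<in>S-{x}. a j ((q \<circ> transpose i x) j)) = (\<Prod>j\<in>S-{x}. a j (q j))"
      using assms(2) by (intro prod.cong) (auto simp: transpose_def)
    then have "(\<Prod>j\<in>S. a j ((q \<circ> transpose i x) j)) = a x i * (\<Prod>j\<in>S-{x}. a j (q j))"
      using fix_i[OF q] by (simp add: prod.remove[OF assms(1) x])
    ultimately show ?thesis
      using assms \<open>x \<noteq> i\<close> by (simp add: F_def ac_simps)
  qed
  have "det_on (insert i S) a =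
      (\<Sum>q | q permutes S. F q) + (\<Sum>x\<in>S. \<Sum>q | q permutes S. F (q \<circ> transpose i x))"
    unfolding det_on_def F_def[symmetric]
    by (simp add: sum_over_permutations_insert_right assms)
  also have "(\<Sum>q | q permutes S. F q) = a i i * det_on S a"
    by (simp add: F_id det_on_def sum_distrib_left)
  also have "(\<Sum>x\<in>S. \<Sum>q | q permutes S. F (q \<circ> transpose i x)) =
      - (\<Sum>x\<in>S. a x i * det_on S (a(x := a i)))"
    by (simp add: F_swap det_on_fun_upd[OF assms(1)] sum_distrib_left sum_negf)
  finally show ?thesis by simp
qed

lemma prod_of_bool:
  "finite A \<Longrightarrow> (\<Prod>x\<in>A. of_bool (P x) :: 'a::comm_semiring_1) = of_bool (\<forall>x\<in>A. P x)"
  by (induction A rule: finite_induct) auto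

lemma permutes_fixing_outside:
  assumes "X \<subseteq> S"
  shows "p permutes S \<and> (\<forall>s\<in>S-X. s = p s) \<longleftrightarrow> p permutes X"
  using assms permutes_superset[of p S X] permutes_subset[of p X S] permutes_not_in[of p X]
  by (metis Diff_iff)

lemma det_on_id_minus:
  assumes "finite S"
  shows "det_on S (\<lambda>r c. of_bool (r = c) - a r c) = (\<Sum>X\<in>Pow S. (-1) ^ card X * det_on X a)"
proof -
  have expand: "(\<Prod>s\<in>S. of_bool (s = p s) - a s (p s)) =
      (\<Sum>X\<in>Pow S. (-1) ^ card X * (of_bool (\<forall>s\<in>S-X. s = p s) * (\<Prod>s\<in>X. a s (p s))))" for p
  proof -
    have "(\<Prod>s\<in>S. of_bool (s = p s) - a s (p s)) =
        (\<Sum>X\<in>Pow S. (\<Prod>s\<in>X. - a s (p s)) * (\<Prod>s\<in>S-X. of_bool (s = p s)))"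
      using prod_add[OF assms, of "\<lambda>s. - a s (p s)" "\<lambda>s. of_bool (s = p s)"] by simp
    then show ?thesis
      using assms by (simp add: prod_uminus prod_of_bool ac_simps)
  qed
  have "det_on S (\<lambda>r c. of_bool (r = c) - a r c) =
      (\<Sum>X\<in>Pow S. (-1) ^ card X *
        (\<Sum>p | p permutes S. of_bool (\<forall>s\<in>S-X. s = p s) * (of_int (sign p) * (\<Prod>s\<in>X. a s (p s)))))"
    unfolding det_on_def expand sum_distrib_left by (subst sum.swap) (simp add: ac_simps)
  also have "\<dots> = (\<Sum>X\<in>Pow S. (-1) ^ card X * det_on X a)"
  proof (rule sum.cong[OF refl])
    fix X assume "X \<in> Pow S"
    then have fixing: "{p. p permutes S} \<inter> {p. \<forall>s\<in>S-X. s = p s} = {p. p permutes X}"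
      using permutes_fixing_outside[of X S] by blast
    show "(-1) ^ card X *
        (\<Sum>p | p permutes S. of_bool (\<forall>s\<in>S-X. s = p s) * (of_int (sign p) * (\<Prod>s\<in>X. a s (p s)))) =
      (-1) ^ card X * det_on X a"
      unfolding det_on_def sum_of_bool_mult_eq[OF finite_permutations[OF assms]] fixing
      by (rule refl)
  qed
  finally show ?thesis .
qed

lemma det_on_reindex:
  assumes f: "bij_betw f T S" and "finite T"
  shows "det_on S a = det_on T (\<lambda>i j. a (f i) (f j))"
proof -
  have inj: "inj_on f T" using f by (rule bij_betw_imp_inj_on)
  define g where "g = inv_into T f"
  have g: "bij_betw g S T" unfolding g_def by (rule bij_betw_inv_into[OF f])
  have gf: "g (f x) = x" if "x \<in> T" for x using inj that by (simp add: g_def)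
  have fg: "f (g x) = x" if "x \<in> S" for x using f that by (simp add: g_def bij_betw_inv_into_right)
  define F where "F q = of_int (sign q) * (\<Prod>s\<in>S. a s (q s))" for q
  have F_map: "F (map_permutation T f p) = of_int (sign p) * (\<Prod>i\<in>T. a (f i) (f (p i)))"
    if p: "p permutes T" for p
    using prod.reindex_bij_betw[OF f, of "\<lambda>s. a s (map_permutation T f p s)"]
    by (simp add: F_def sign_map_permutation[OF inj p \<open>finite T\<close>] map_permutation_apply[OF inj])
  have map_inv: "map_permutation S g (map_permutation T f p) = p" if "p permutes T" for p
    using map_permutation_compose_inv[OF f that gf] .
  have inv_map: "map_permutation T f (map_permutation S g q) = q" if "q permutes S" for q
    using map_permutation_compose_inv[OF g that fg] .
  have "det_on S a = (\<Sum>p | p permutes T. F (map_permutation T f p))"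
    unfolding det_on_def F_def[symmetric]
    by (rule sum.reindex_bij_witness[where i="map_permutation T f" and j="map_permutation S g"])
      (auto simp: map_inv inv_map map_permutation_permutes[OF f] map_permutation_permutes[OF g])
  also have "\<dots> = det_on T (\<lambda>i j. a (f i) (f j))"
    by (simp add: det_on_def F_map)
  finally show ?thesis .
qed

section \<open>Binomial sums\<close>

lemma sum_Pow_card:
  fixes h :: "nat \<Rightarrow> 'a::comm_semiring_1"
  assumes "finite K"
  shows "(\<Sum>X\<in>Pow K. h (card X)) = (\<Sum>j\<le>card K. of_nat (card K choose j) * h j)"
proof -
  have "(\<Sum>X\<in>Pow K. h (card X)) = (\<Sum>j\<le>card K. \<Sum>X | X \<in> Pow K \<and> card X = j. h (card X))"
    using assms card_mono[OF assms] by (intro sum.group[symmetric]) auto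
  also have "\<dots> = (\<Sum>j\<le>card K. of_nat (card K choose j) * h j)"
    using n_subsets[OF assms] by (simp add: Pow_def conj_commute)
  finally show ?thesis .
qed

lemma choose_ratio_step:
  assumes "j < N" "j < M"
  shows "real (N - j) * (real (N choose j) / real (M choose j)) =
    real (M - j) * (real (N choose Suc j) / real (M choose Suc j))"
proof -
  have step: "real (n - j) * real (n choose j) = real (Suc j) * real (n choose Suc j)" for n
    using binomial_absorb_comp[of n j] binomial_absorption[of j n] by (metis of_nat_mult)
  have "real (N - j) * real (N choose j) * real (M choose Suc j) =
      real (Suc j) * real (N choose Suc j) * real (M choose Suc j)"
    by (simp only: step)
  also have "\<dots> = real (N choose Suc j) * (real (Suc j) * real (M choose Suc j))"
    by (simp only: ac_simps)
  also have "\<dots> = real (N choose Suc j) * (real (M - j) * real (M choose j))"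
    by (simp only: step)
  finally show ?thesis
    using assms by (simp add: field_simps)
qed

lemma alternating_sum_choose_diff:
  assumes "k \<le> N" "k \<le> M - N"
  shows "(\<Sum>j\<le>k. (-1) ^ j * real (k choose j) * real ((M - j) choose (N - j))) =
    real ((M - k) choose N)"
  using assms
proof (induction k arbitrary: M N)
  case 0
  then show ?case by simp
next
  case (Suc k)
  obtain N' M' where N: "N = Suc N'" and M: "M = Suc M'"
    using Suc.prems by (cases N; cases M) auto
  define X where "X j = real ((M - j) choose (N - j))" for j
  have X_Suc: "X (Suc j) = real ((M' - j) choose (N' - j))" for j
    by (simp add: X_def M N)
  have "(\<Sum>j\<le>Suc k. (-1) ^ j * real (Suc k choose j) * X j) =
      (\<Sum>j\<le>Suc k. (-1) ^ j * real (k choose j) * X j) -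
      (\<Sum>j\<le>k. (-1) ^ j * real (k choose j) * X (Suc j))"
    by (simp add: sum.atMost_Suc_shift sum.distrib sum_subtractf sum_negf algebra_simps
        del: sum.atMost_Suc)
  also have "(\<Sum>j\<le>Suc k. (-1) ^ j * real (k choose j) * X j) = real ((M - k) choose N)"
    using Suc.IH[of N M] Suc.prems by (simp add: X_def)
  also have "(\<Sum>j\<le>k. (-1) ^ j * real (k choose j) * X (Suc j)) = real ((M' - k) choose N')"
    using Suc.IH[of N' M'] Suc.prems by (simp add: X_Suc M N)
  also have "real ((M - k) choose N) - real ((M' - k) choose N') = real ((M - Suc k) choose N)"
    using Suc.prems by (simp add: M N Suc_diff_le)
  finally show ?case by (simp add: X_def)
qed

lemma alternating_sum_choose_ratio:
  assumes "k \<le> N" "k \<le> M - N"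
  shows "(\<Sum>j\<le>k. real (k choose j) * ((-1) ^ j * (real (N choose j) / real (M choose j)))) =
    real ((M - N) choose k) / real (M choose k)"
proof (cases "k = 0")
  case False
  then have "N < M" "N + k \<le> M" using assms by simp_all
  have ratio:
    "real (N choose j) / real (M choose j) = real ((M - j) choose (N - j)) / real (M choose N)"
    if "j \<le> N" for j
    using choose_mult[OF that, of M] \<open>N < M\<close> that
    by (simp add: field_simps flip: of_nat_mult)
  have "(M choose k) * ((M - k) choose N) = (M choose N) * ((M - N) choose k)"
    using choose_mult[of k "N + k" M] choose_mult[of N "N + k" M] binomial_symmetric[of k "N + k"]
      \<open>N + k \<le> M\<close>
    by (simp add: add.commute)
  then have swap:
    "real ((M - k) choose N) / real (M choose N) = real ((M - N) choose k) / real (M choose k)"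
    using \<open>N < M\<close> assms by (simp add: field_simps flip: of_nat_mult)
  have "(\<Sum>j\<le>k. real (k choose j) * ((-1) ^ j * (real (N choose j) / real (M choose j)))) =
      (\<Sum>j\<le>k. (-1) ^ j * real (k choose j) * real ((M - j) choose (N - j))) / real (M choose N)"
    using assms by (simp add: ratio sum_divide_distrib ac_simps)
  then show ?thesis
    using alternating_sum_choose_diff[OF assms] swap by simp
qed simp

section \<open>Idempotent matrices with uniform principal minors\<close>

lemma additive_of_nat_mult:
  fixes f :: "'a::ring_1 \<Rightarrow> 'b::ring_1"
  assumes "additive f"
  shows "f (of_nat n * x) = of_nat n * f x"
  by (induction n) (simp_all add: additive.add[OF assms] additive.zero[OF assms] distrib_right)

lemma additive_neg_one_power_mult:
  fixes f :: "'a::ring_1 \<Rightarrow> 'b::ring_1"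
  assumes "additive f"
  shows "f ((-1) ^ n * x) = (-1) ^ n * f x"
  by (cases "even n") (simp_all add: additive.minus[OF assms])

lemma det_on_insert_sum_idempotent:
  fixes a :: "'i \<Rightarrow> 'i \<Rightarrow> 'a::field_char_0"
  assumes "finite U" "J \<subseteq> U"
    and idem: "\<And>x y. x \<in> U \<Longrightarrow> y \<in> U \<Longrightarrow> (\<Sum>z\<in>U. a x z * a z y) = a x y"
  shows "(\<Sum>i\<in>U-J. det_on (insert i J) a) = ((\<Sum>i\<in>U. a i i) - of_nat (card J)) * det_on J a"
proof -
  have J: "finite J" using assms finite_subset by blast
  define D where "D = det_on J a"
  define C where "C = cofactor_on J a"
  have U_minus_J: "(\<Sum>i\<in>U-J. f i) = (\<Sum>i\<in>U. f i) - (\<Sum>i\<in>J. f i)" for f :: "'i \<Rightarrow> 'a"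
    by (rule sum_diff[OF assms(1,2)])
  have "(\<Sum>i\<in>U-J. det_on (insert i J) a) =
      (\<Sum>i\<in>U-J. a i i) * D - (\<Sum>i\<in>U-J. \<Sum>x\<in>J. \<Sum>y\<in>J. a x i * a i y * C x y)"
    using J by (simp add: det_on_insert det_on_row_expansion D_def C_def sum_subtractf
        sum_distrib_left sum_distrib_right mult.assoc)
  also have "(\<Sum>i\<in>U-J. \<Sum>x\<in>J. \<Sum>y\<in>J. a x i * a i y * C x y) =
      (\<Sum>x\<in>J. \<Sum>y\<in>J. (\<Sum>i\<in>U-J. a x i * a i y) * C x y)"
    by (subst sum.swap, rule sum.cong[OF refl], subst sum.swap) (simp add: sum_distrib_right)
  also have "\<dots> = (\<Sum>x\<in>J. \<Sum>y\<in>J. a x y * C x y) - (\<Sum>x\<in>J. \<Sum>y\<in>J. \<Sum>i\<in>J. a x i * a i y * C x y)"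
    using assms(2)
    by (simp add: U_minus_J idem subset_iff left_diff_distrib sum_subtractf sum_distrib_right
        cong: sum.cong)
  also have "(\<Sum>x\<in>J. \<Sum>y\<in>J. \<Sum>i\<in>J. a x i * a i y * C x y) =
      (\<Sum>x\<in>J. \<Sum>i\<in>J. a x i * (\<Sum>y\<in>J. a i y * C x y))"
    by (rule sum.cong[OF refl], subst sum.swap) (simp add: sum_distrib_left mult.assoc)
  also have "(\<Sum>x\<in>J. \<Sum>y\<in>J. a x y * C x y) = of_nat (card J) * D"
    using J by (simp add: C_def D_def cofactor_on_expansion)
  also have "(\<Sum>x\<in>J. \<Sum>i\<in>J. a x i * (\<Sum>y\<in>J. a i y * C x y)) = (\<Sum>x\<in>J. a x x) * D"
    using J by (simp add: C_def D_def cofactor_on_expansion sum_distrib_right if_distrib sum.delta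
        cong: sum.cong if_cong)
  finally show ?thesis
    by (simp add: U_minus_J D_def algebra_simps)
qed

lemma idempotent_uniform_minors_downward:
  fixes a :: "'i \<Rightarrow> 'i \<Rightarrow> 'a::field_char_0" and L :: "'a \<Rightarrow> real"
  assumes L: "additive L" and U: "finite U"
    and idem: "\<And>x y. x \<in> U \<Longrightarrow> y \<in> U \<Longrightarrow> (\<Sum>z\<in>U. a x z * a z y) = a x y"
    and trace: "(\<Sum>i\<in>U. a i i) = of_nat N"
    and "k \<le> N" "k \<le> card U"
    and uniform: "\<And>K. K \<subseteq> U \<Longrightarrow> card K = k \<Longrightarrow>
      L (det_on K a) = real (N choose k) / real (card U choose k)"
    and "X \<subseteq> U" "card X \<le> k"
  shows "L (det_on X a) = real (N choose card X) / real (card U choose card X)"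
  using \<open>X \<subseteq> U\<close> \<open>card X \<le> k\<close>
proof (induction "k - card X" arbitrary: X)
  case 0
  then show ?case using uniform by simp
next
  case (Suc d)
  define j where "j = card X"
  have X: "finite X" using Suc.prems U finite_subset by blast
  have "j < k" "j < N" "j < card U" using Suc.hyps(2) \<open>k \<le> N\<close> \<open>k \<le> card U\<close> by (auto simp: j_def)
  have inserted: "L (det_on (insert i X) a) = real (N choose Suc j) / real (card U choose Suc j)"
    if "i \<in> U - X" for i
    using that Suc X \<open>j < k\<close> by (simp add: j_def)
  have "real (N - j) * L (det_on X a) = L (\<Sum>i\<in>U-X. det_on (insert i X) a)"
    using det_on_insert_sum_idempotent[OF U Suc.prems(1) idem] trace \<open>j < N\<close>
    by (simp add: j_def additive_of_nat_mult[OF L] flip: of_nat_diff)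
  also have "\<dots> = real (card U - j) * (real (N choose Suc j) / real (card U choose Suc j))"
    using card_Diff_subset[OF X Suc.prems(1)] by (simp add: additive.sum[OF L] inserted j_def)
  also have "\<dots> = real (N - j) * (real (N choose j) / real (card U choose j))"
    using choose_ratio_step[OF \<open>j < N\<close> \<open>j < card U\<close>] by simp
  finally show ?case
    using \<open>j < N\<close> unfolding j_def by (subst (asm) mult_cancel_left) simp
qed

lemma idempotent_uniform_minors_complement:
  fixes a :: "'i \<Rightarrow> 'i \<Rightarrow> 'a::field_char_0" and L :: "'a \<Rightarrow> real"
  assumes L: "additive L" and U: "finite U"
    and idem: "\<And>x y. x \<in> U \<Longrightarrow> y \<in> U \<Longrightarrow> (\<Sum>z\<in>U. a x z * a z y) = a x y"
    and trace: "(\<Sum>i\<in>U. a i i) = of_nat N"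
    and k: "k \<le> N" "k \<le> card U - N"
    and uniform: "\<And>K. K \<subseteq> U \<Longrightarrow> card K = k \<Longrightarrow>
      L (det_on K a) = real (N choose k) / real (card U choose k)"
    and K: "K \<subseteq> U" "card K = k"
  shows "L (det_on K (\<lambda>r c. of_bool (r = c) - a r c)) =
    real ((card U - N) choose k) / real (card U choose k)"
proof -
  have "finite K" using K U finite_subset by blast
  have smaller: "L (det_on X a) = real (N choose card X) / real (card U choose card X)"
    if "X \<in> Pow K" for X
  proof -
    have "k \<le> card U" using k by linarith
    moreover have "X \<subseteq> U" "card X \<le> k" using that K U card_mono[OF \<open>finite K\<close>] by auto
    ultimately show ?thesis
      using idempotent_uniform_minors_downward[OF L U idem trace \<open>k \<le> N\<close> _ uniform] by blast
  qed
  have "L (det_on K (\<lambda>r c. of_bool (r = c) - a r c)) =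
      (\<Sum>X\<in>Pow K. (-1) ^ card X * (real (N choose card X) / real (card U choose card X)))"
    by (simp add: det_on_id_minus[OF \<open>finite K\<close>] additive.sum[OF L]
        additive_neg_one_power_mult[OF L] smaller)
  also have "\<dots> =
      (\<Sum>j\<le>k. real (k choose j) * ((-1) ^ j * (real (N choose j) / real (card U choose j))))"
    using sum_Pow_card[OF \<open>finite K\<close>,
        of "\<lambda>j. (-1) ^ j * (real (N choose j) / real (card U choose j))"] K
    by simp
  also have "\<dots> = real ((card U - N) choose k) / real (card U choose k)"
    by (rule alternating_sum_choose_ratio[OF k])
  finally show ?thesis .
qed

section \<open>Gram matrices of column selections\<close>

lemma pick_atLeastLessThan:
  assumes "i < n"
  shows "pick {0..<n} i = i"
proof -
  have "{a \<in> {0..<n}. a < i} = {0..<i}" using assms by auto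
  then show ?thesis using pick_card_in_set[of i "{0..<n}"] assms by simp
qed

lemma bij_betw_pick:
  assumes "finite I"
  shows "bij_betw (pick I) {0..<card I} I"
proof -
  have inj: "inj_on (pick I) {0..<card I}"
    by (rule inj_onI) (metis atLeastLessThan_iff linorder_neqE_nat pick_mono_le less_irrefl)
  have "pick I ` {0..<card I} \<subseteq> I" using pick_in_set_le by auto
  moreover have "card (pick I ` {0..<card I}) = card I" using card_image[OF inj] by simp
  ultimately have "pick I ` {0..<card I} = I" using card_subset_eq[OF assms] by blast
  then show ?thesis using inj by (simp add: bij_betw_def)
qed

lemma det_eq_det_on:
  assumes "A \<in> carrier_mat n n"
  shows "det A = det_on {0..<n} (\<lambda>i j. A $$ (i, j))"
  by (simp add: det_def'[OF assms] det_on_def)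

lemma det_submatrix_eq_det_on:
  assumes "I \<subseteq> {0..<dim_row A}" "I \<subseteq> {0..<dim_col A}"
  shows "det (submatrix A I I) = det_on I (\<lambda>i j. A $$ (i, j))"
proof -
  have rows: "{i. i < dim_row A \<and> i \<in> I} = I" and cols: "{i. i < dim_col A \<and> i \<in> I} = I"
    using assms by auto
  have "finite I" using assms(1) finite_subset by blast
  have "submatrix A I I \<in> carrier_mat (card I) (card I)"
    by (intro carrier_matI) (simp_all only: dim_submatrix rows cols)
  then have "det (submatrix A I I) = det_on {0..<card I} (\<lambda>i j. submatrix A I I $$ (i, j))"
    by (rule det_eq_det_on)
  also have "\<dots> = det_on {0..<card I} (\<lambda>i j. A $$ (pick I i, pick I j))"
    using submatrix_index[of _ A I _ I] by (intro det_on_cong) (simp add: rows cols)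
  also have "\<dots> = det_on I (\<lambda>i j. A $$ (i, j))"
    by (rule det_on_reindex[OF bij_betw_pick[OF \<open>finite I\<close>], symmetric]) simp
  finally show ?thesis .
qed

lemma dim_mat_adjoint [simp]:
  "dim_row (mat_adjoint A) = dim_col A" "dim_col (mat_adjoint A) = dim_row A"
  by (simp_all add: mat_adjoint_def)

lemma mat_adjoint_index:
  "i < dim_col A \<Longrightarrow> j < dim_row A \<Longrightarrow> mat_adjoint A $$ (i, j) = conjugate (A $$ (j, i))"
  by (simp add: mat_adjoint_def mat_of_rows_index)

lemma mat_adjoint_mult_index:
  assumes "i < dim_col A" "j < dim_col A"
  shows "(mat_adjoint A * A) $$ (i, j) =
    (\<Sum>r\<in>{0..<dim_row A}. conjugate (A $$ (r, i)) * A $$ (r, j))"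
  using assms by (simp add: mat_adjoint_def mat_of_rows_index scalar_prod_def)

lemma cols_sub_index:
  assumes "K \<subseteq> {0..<dim_col A}" "r < dim_row A" "c < card K"
  shows "cols_sub A K $$ (r, c) = A $$ (r, pick K c)"
proof -
  have "{j. j < dim_col A \<and> j \<in> K} = K" using assms(1) by auto
  then show ?thesis
    using assms(2,3) by (simp add: cols_sub_def submatrix_index pick_atLeastLessThan)
qed

lemma dim_cols_sub:
  assumes "K \<subseteq> {0..<dim_col A}"
  shows "dim_row (cols_sub A K) = dim_row A" "dim_col (cols_sub A K) = card K"
proof -
  have "{j. j < dim_col A \<and> j \<in> K} = K" using assms by auto
  then show "dim_row (cols_sub A K) = dim_row A" "dim_col (cols_sub A K) = card K"
    by (simp_all add: cols_sub_def dim_submatrix)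
qed

lemma mat_adjoint_mult_cols_sub:
  assumes K: "K \<subseteq> {0..<dim_col A}"
  shows "mat_adjoint (cols_sub A K) * cols_sub A K = submatrix (mat_adjoint A * A) K K"
proof -
  have K': "{j. j < dim_col A \<and> j \<in> K} = K" using K by auto
  have pick: "pick K i < dim_col A" if "i < card K" for i
    using pick_in_set_le[OF that] K by auto
  show ?thesis
  proof (rule eq_matI)
    fix i j
    assume "i < dim_row (submatrix (mat_adjoint A * A) K K)"
      and "j < dim_col (submatrix (mat_adjoint A * A) K K)"
    then have ij: "i < card K" "j < card K" by (simp_all add: dim_submatrix K')
    have "(mat_adjoint (cols_sub A K) * cols_sub A K) $$ (i, j) =
        (\<Sum>r\<in>{0..<dim_row A}. conjugate (A $$ (r, pick K i)) * A $$ (r, pick K j))"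
      using ij by (subst mat_adjoint_mult_index)
        (simp_all add: dim_cols_sub[OF K] cols_sub_index[OF K])
    also have "\<dots> = (mat_adjoint A * A) $$ (pick K i, pick K j)"
      using pick ij by (subst mat_adjoint_mult_index) simp_all
    also have "\<dots> = submatrix (mat_adjoint A * A) K K $$ (i, j)"
      using ij by (simp add: submatrix_index K')
    finally show "(mat_adjoint (cols_sub A K) * cols_sub A K) $$ (i, j) =
        submatrix (mat_adjoint A * A) K K $$ (i, j)" .
  qed (simp_all add: dim_cols_sub[OF K] dim_submatrix K')
qed

lemma det_gram_cols_sub:
  assumes "K \<subseteq> {0..<dim_col A}"
  shows "det (mat_adjoint (cols_sub A K) * cols_sub A K) =
    det_on K (\<lambda>i j. (mat_adjoint A * A) $$ (i, j))"
  unfolding mat_adjoint_mult_cols_sub[OF assms] using assms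
  by (intro det_submatrix_eq_det_on) simp_all

section \<open>Parseval frames and Naimark complements\<close>

lemma parseval_frame_gram_idempotent:
  assumes "parseval_frame N M Phi"
  shows "mat_adjoint Phi * Phi * (mat_adjoint Phi * Phi) = mat_adjoint Phi * Phi"
proof -
  have Phi: "Phi \<in> carrier_mat N M" and one: "Phi * mat_adjoint Phi = 1\<^sub>m N"
    using assms unfolding parseval_frame_def by auto
  have adj: "mat_adjoint Phi \<in> carrier_mat M N" using Phi by auto
  have "mat_adjoint Phi * Phi * (mat_adjoint Phi * Phi) =
      mat_adjoint Phi * (Phi * mat_adjoint Phi * Phi)"
    using Phi adj by (simp add: assoc_mult_mat[of _ M N _ M _ M])
  also have "Phi * mat_adjoint Phi * Phi = Phi"
    using Phi by (simp add: one)
  finally show ?thesis .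
qed

lemma parseval_frame_gram_trace:
  assumes "parseval_frame N M Phi"
  shows "(\<Sum>i\<in>{0..<M}. (mat_adjoint Phi * Phi) $$ (i, i)) = of_nat N"
proof -
  have Phi: "Phi \<in> carrier_mat N M" and one: "Phi * mat_adjoint Phi = 1\<^sub>m N"
    using assms unfolding parseval_frame_def by auto
  have "(\<Sum>i\<in>{0..<M}. (mat_adjoint Phi * Phi) $$ (i, i)) =
      (\<Sum>i\<in>{0..<M}. \<Sum>r\<in>{0..<N}. conjugate (Phi $$ (r, i)) * Phi $$ (r, i))"
    using Phi by (intro sum.cong refl) (subst mat_adjoint_mult_index; simp)
  also have "\<dots> = (\<Sum>r\<in>{0..<N}. (Phi * mat_adjoint Phi) $$ (r, r))"
    using Phi by (subst sum.swap) (simp add: scalar_prod_def mat_adjoint_index mult.commute)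
  also have "\<dots> = of_nat N"
    by (simp add: one)
  finally show ?thesis .
qed

lemma naimark_complement_gram_index:
  assumes "parseval_frame N M Phi" "naimark_complement N M Phi Psi" "i < M" "j < M"
  shows "(mat_adjoint Psi * Psi) $$ (i, j) = of_bool (i = j) - (mat_adjoint Phi * Phi) $$ (i, j)"
  using assms unfolding parseval_frame_def naimark_complement_def by auto

lemma naimark_complement_uniform_gram_minors:
  fixes Phi Psi :: "'a::{conjugatable_field,field_char_0} mat" and L :: "'a \<Rightarrow> real"
  assumes L: "additive L" and frame: "parseval_frame N M Phi"
    and complement: "naimark_complement N M Phi Psi"
    and k: "k \<le> N" "k \<le> M - N"
    and uniform: "\<And>K. K \<subseteq> {0..<M} \<Longrightarrow> card K = k \<Longrightarrow>
      L (det (mat_adjoint (cols_sub Phi K) * cols_sub Phi K)) =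
        real (N choose k) / real (M choose k)"
    and K: "K \<subseteq> {0..<M}" "card K = k"
  shows "L (det (mat_adjoint (cols_sub Psi K) * cols_sub Psi K)) =
    real ((M - N) choose k) / real (M choose k)"
proof -
  define a where "a = (\<lambda>i j. (mat_adjoint Phi * Phi) $$ (i, j))"
  have dims: "dim_col Phi = M" "dim_col Psi = M"
    using frame complement by (auto simp: parseval_frame_def naimark_complement_def)
  have idem: "(\<Sum>z\<in>{0..<M}. a x z * a z y) = a x y" if "x \<in> {0..<M}" "y \<in> {0..<M}" for x y
  proof -
    have "(\<Sum>z\<in>{0..<M}. a x z * a z y) = (mat_adjoint Phi * Phi * (mat_adjoint Phi * Phi)) $$ (x, y)"
      using that dims unfolding a_def by (subst index_mult_mat) (simp_all add: scalar_prod_def)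
    then show ?thesis
      unfolding parseval_frame_gram_idempotent[OF frame] a_def .
  qed
  have trace: "(\<Sum>i\<in>{0..<M}. a i i) = of_nat N"
    using parseval_frame_gram_trace[OF frame] by (simp add: a_def)
  have uniform_a: "L (det_on J a) = real (N choose k) / real (card {0..<M} choose k)"
    if "J \<subseteq> {0..<M}" "card J = k" for J
    using uniform[OF that] det_gram_cols_sub[of J Phi] that dims by (simp add: a_def)
  have "det (mat_adjoint (cols_sub Psi K) * cols_sub Psi K) =
      det_on K (\<lambda>i j. (mat_adjoint Psi * Psi) $$ (i, j))"
    using K dims by (simp add: det_gram_cols_sub)
  also have "\<dots> = det_on K (\<lambda>i j. of_bool (i = j) - a i j)"
  proof (rule det_on_cong)
    fix i j assume "i \<in> K" "j \<in> K"
    then have "i < M" "j < M" using K by auto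
    then show "(mat_adjoint Psi * Psi) $$ (i, j) = of_bool (i = j) - a i j"
      unfolding a_def by (rule naimark_complement_gram_index[OF frame complement])
  qed
  finally have Psi_minor: "det (mat_adjoint (cols_sub Psi K) * cols_sub Psi K) =
      det_on K (\<lambda>i j. of_bool (i = j) - a i j)" .
  have "k \<le> card {0..<M} - N" using k by simp
  from idempotent_uniform_minors_complement[OF L finite_atLeastLessThan idem trace k(1) this uniform_a K]
  show ?thesis
    unfolding Psi_minor by (simp only: card_atLeastLessThan diff_zero)
qed

theorem proposition12:
  shows
  "(\<forall>(N::nat) (M::nat) (k::nat) (Phi::real mat) (Psi::real mat).
      parseval_frame N M Phi \<longrightarrow> naimark_complement N M Phi Psi \<longrightarrow>
      k \<le> min N (M - N) \<longrightarrow>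
      (\<forall>K. K \<subseteq> {0..<M} \<and> card K = k \<longrightarrow> vol_r (cols_sub Phi K) = cMNk M N k) \<longrightarrow>
      (\<forall>K. K \<subseteq> {0..<M} \<and> card K = k \<longrightarrow> vol_r (cols_sub Psi K) = cMNk M (M - N) k))
   \<and>
   (\<forall>(N::nat) (M::nat) (k::nat) (Phi::complex mat) (Psi::complex mat).
      parseval_frame N M Phi \<longrightarrow> naimark_complement N M Phi Psi \<longrightarrow>
      k \<le> min N (M - N) \<longrightarrow>
      (\<forall>K. K \<subseteq> {0..<M} \<and> card K = k \<longrightarrow> vol_c (cols_sub Phi K) = cMNk M N k) \<longrightarrow>
      (\<forall>K. K \<subseteq> {0..<M} \<and> card K = k \<longrightarrow> vol_c (cols_sub Psi K) = cMNk M (M - N) k))"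
proof (intro conjI allI impI)
  fix N M k K and Phi Psi :: "real mat"
  assume frame: "parseval_frame N M Phi" and complement: "naimark_complement N M Phi Psi"
    and k: "k \<le> min N (M - N)" and K: "K \<subseteq> {0..<M} \<and> card K = k"
    and uniform: "\<forall>K. K \<subseteq> {0..<M} \<and> card K = k \<longrightarrow> vol_r (cols_sub Phi K) = cMNk M N k"
  have "additive (\<lambda>x::real. x)" by (rule additive.intro) simp
  from naimark_complement_uniform_gram_minors[OF this frame complement] k K uniform
  show "vol_r (cols_sub Psi K) = cMNk M (M - N) k"
    by (simp add: vol_r_def cMNk_def)
next
  fix N M k K and Phi Psi :: "complex mat"
  assume frame: "parseval_frame N M Phi" and complement: "naimark_complement N M Phi Psi"
    and k: "k \<le> min N (M - N)" and K: "K \<subseteq> {0..<M} \<and> card K = k"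
    and uniform: "\<forall>K. K \<subseteq> {0..<M} \<and> card K = k \<longrightarrow> vol_c (cols_sub Phi K) = cMNk M N k"
  have "additive Re" by (rule additive.intro) simp
  from naimark_complement_uniform_gram_minors[OF this frame complement] k K uniform
  show "vol_c (cols_sub Psi K) = cMNk M (M - N) k"
    by (simp add: vol_c_def cMNk_def)
qed

end
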